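(* For every $h>2/3$ there is an instance with two groups in which all agents have binary valuations and no allocation is $h$-democratic positive-MMS-fair.
   Context: There is a finite set $G$ of goods and $k$ groups $A_1,\dots,A_k$ of agents ($n_i\ge1$ agents in $A_i$); here $k=2$. An agent $a$ is binary if her utility is additive, $u_a(X)=\sum_{g\in X}u_a(\{g\})$, with $u_a(\{g\})\in\{0,1\}$. An allocation is a partition $(G_1,\dots,G_k)$ of $G$; every agent of $A_i$ gets utility $u_a(G_i)$. $\mathrm{MMS}^k_a(G)$ is the maximum over partitions of $G$ into $k$ sets of the minimum utility of $a$ for a set of the partition. The allocation is positive-MMS-fair for $a\in A_i$ if $\mathrm{MMS}^k_a(G)>0$ implies $u_a(G_i)>0$. For $h\in[0,1]$, an allocation is $h$-democratic fair (for a given individual fairness notion) if for every $i$, at least $h\cdot n_i$ agents of $A_i$ find it fair. *)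

theory Defs
  imports Main Complex_Main
begin

definition util :: "(nat \<Rightarrow> nat) \<Rightarrow> nat set \<Rightarrow> nat" where
  "util w X = (\<Sum>g\<in>X. w g)"

definition binary_val :: "nat set \<Rightarrow> (nat \<Rightarrow> nat) \<Rightarrow> bool" where
  "binary_val G w \<longleftrightarrow> (\<forall>g\<in>G. w g \<in> {0, 1})"

(* P is a partition of G into k (possibly empty) bundles P 0, ..., P (k-1) *)
definition is_partition :: "nat \<Rightarrow> nat set \<Rightarrow> (nat \<Rightarrow> nat set) \<Rightarrow> bool" where
  "is_partition k G P \<longleftrightarrow>
     (\<Union>i<k. P i) = G \<and> (\<forall>i<k. \<forall>j<k. i \<noteq> j \<longrightarrow> P i \<inter> P j = {})"

definition mms :: "nat \<Rightarrow> (nat \<Rightarrow> nat) \<Rightarrow> nat set \<Rightarrow> nat" where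
  "mms k w G = Max {Min ((\<lambda>i. util w (P i)) ` {..<k}) | P. is_partition k G P}"

definition pos_mms_fair :: "nat \<Rightarrow> (nat \<Rightarrow> nat) \<Rightarrow> nat set \<Rightarrow> nat set \<Rightarrow> bool" where
  "pos_mms_fair k w G B \<longleftrightarrow> (mms k w G > 0 \<longrightarrow> util w B > 0)"

(* k groups; group i has agents 0..<n i, agent j of group i has valuation v i j. *)
definition h_dem_pos_mms_fair ::
  "real \<Rightarrow> nat \<Rightarrow> nat set \<Rightarrow> (nat \<Rightarrow> nat) \<Rightarrow> (nat \<Rightarrow> nat \<Rightarrow> nat \<Rightarrow> nat)
     \<Rightarrow> (nat \<Rightarrow> nat set) \<Rightarrow> bool" where
  "h_dem_pos_mms_fair h k G n v P \<longleftrightarrow>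
     (\<forall>i<k. h * real (n i) \<le> real (card {j. j < n i \<and> pos_mms_fair k (v i j) G (P i)}))"

end

theory Submission
  imports Defs
begin

text \<open>Take three goods and, in each group, three agents, agent j valuing every good except j.
Each agent can split the goods into two bundles she values positively, so her MMS is positive.
For h > 2/3 every agent of each group must then value her group's bundle positively, so each
bundle contains at least two goods, and two disjoint such bundles do not fit into three goods.\<close>

lemma util_pos_iff: "finite X \<Longrightarrow> util w X > 0 \<longleftrightarrow> (\<exists>g\<in>X. w g > 0)"
  unfolding util_def by (metis not_gr0 sum_eq_0_iff)

lemma mms_pos_of_partition:
  assumes "finite G" "0 < k" "is_partition k G P" "\<forall>i<k. util w (P i) > 0"
  shows "mms k w G > 0"
proof -
  let ?S = "{Min ((\<lambda>i. util w (Q i)) ` {..<k}) | Q. is_partition k G Q}"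
  have "?S \<subseteq> {..util w G}"
  proof
    fix x assume "x \<in> ?S"
    then obtain Q where x: "x = Min ((\<lambda>i. util w (Q i)) ` {..<k})" and "is_partition k G Q"
      by blast
    then have "Q 0 \<subseteq> G"
      using \<open>0 < k\<close> unfolding is_partition_def by auto
    then have "util w (Q 0) \<le> util w G"
      unfolding util_def using \<open>finite G\<close> by (intro sum_mono2) auto
    moreover have "x \<le> util w (Q 0)"
      unfolding x using \<open>0 < k\<close> by (intro Min_le) auto
    ultimately show "x \<in> {..util w G}" by simp
  qed
  then have "finite ?S" by (rule finite_subset) simp
  moreover have "Min ((\<lambda>i. util w (P i)) ` {..<k}) \<in> ?S"
    using assms(3) by blast
  moreover have "Min ((\<lambda>i. util w (P i)) ` {..<k}) > 0"
    using assms(2,4) by (subst Min_gr_iff) auto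
  ultimately show ?thesis
    unfolding mms_def by (meson Max_ge less_le_trans)
qed

lemma h_dem_pos_mms_fair_all_agents:
  assumes "h_dem_pos_mms_fair h k G n v P" "i < k" "real (n i) - 1 < h * real (n i)" "j < n i"
  shows "pos_mms_fair k (v i j) G (P i)"
proof -
  let ?A = "{j. j < n i \<and> pos_mms_fair k (v i j) G (P i)}"
  have "?A \<subseteq> {..<n i}" by auto
  moreover have "real (n i) - 1 < real (card ?A)"
    using assms(1-3) unfolding h_dem_pos_mms_fair_def by force
  then have "card {..<n i} \<le> card ?A" by simp
  ultimately have "?A = {..<n i}"
    by (intro card_seteq) auto
  then show ?thesis using \<open>j < n i\<close> by blast
qed

definition all_but :: "nat \<Rightarrow> nat \<Rightarrow> nat \<Rightarrow> nat" where
  "all_but m j g = (if g < m \<and> g \<noteq> j then 1 else 0)"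

lemma binary_val_all_but: "binary_val G (all_but m j)"
  unfolding binary_val_def all_but_def by auto

lemma mms_all_but_pos:
  assumes "3 \<le> m"
  shows "mms 2 (all_but m j) {..<m} > 0"
proof -
  define a :: nat where "a = (if j = 0 then 1 else 0)"
  define b :: nat where "b = (if j = 2 then 1 else 2)"
  define P :: "nat \<Rightarrow> nat set" where "P i = (if i = 0 then {a} else {..<m} - {a})" for i
  have "a < m" "b < m" "a \<noteq> j" "b \<noteq> j" "b \<noteq> a"
    using assms unfolding a_def b_def by auto
  then have "is_partition 2 {..<m} P"
    unfolding is_partition_def P_def by (auto simp: lessThan_Suc numeral_2_eq_2)
  moreover have "\<forall>i<2. util (all_but m j) (P i) > 0"
  proof (intro allI impI)
    fix i :: nat assume "i < 2"
    then have "a \<in> P i \<or> b \<in> P i"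
      using \<open>b < m\<close> \<open>b \<noteq> a\<close> unfolding P_def by auto
    then show "util (all_but m j) (P i) > 0"
      using \<open>a < m\<close> \<open>b < m\<close> \<open>a \<noteq> j\<close> \<open>b \<noteq> j\<close>
      by (subst util_pos_iff) (auto simp: P_def all_but_def)
  qed
  ultimately show ?thesis
    by (intro mms_pos_of_partition) auto
qed

lemma two_le_card_if_valued_by_all_but:
  assumes "0 < m" "B \<subseteq> {..<m}" "\<forall>j<m. util (all_but m j) B > 0"
  shows "2 \<le> card B"
proof (rule ccontr)
  assume "\<not> 2 \<le> card B"
  moreover have "finite B"
    using assms(2) finite_subset by blast
  ultimately have "B = {} \<or> (\<exists>j. B = {j})"
    by (metis One_nat_def card_1_singletonE less_2_cases not_le card_0_eq)
  moreover have "B \<noteq> {}"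
    using assms(1) assms(3)[rule_format, of 0] util_pos_iff[OF \<open>finite B\<close>] by auto
  ultimately obtain j where "B = {j}" by blast
  then show False
    using assms(2) assms(3)[rule_format, of j] by (auto simp: util_def all_but_def)
qed

lemma partition_three_small_bundle:
  assumes "is_partition 2 {..<3} P"
  shows "\<exists>i<2. card (P i) < 2"
proof -
  have "P 0 \<inter> P 1 = {}" "P 0 \<union> P 1 = {..<3}"
    using assms unfolding is_partition_def by (auto simp: lessThan_Suc numeral_2_eq_2)
  then have "card (P 0) + card (P 1) = 3"
    by (metis card_Un_disjoint card_lessThan finite_Un finite_lessThan)
  then have "card (P 0) < 2 \<or> card (P 1) < 2"
    by linarith
  then show ?thesis
    using pos2 one_less_numeral_iff semiring_norm(76) by blast
qed

theorem mainTheorem3: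
  fixes h :: real
  assumes "2/3 < h" and "h \<le> 1"
  shows "\<exists>(G::nat set) (n::nat \<Rightarrow> nat) (v::nat \<Rightarrow> nat \<Rightarrow> nat \<Rightarrow> nat).
           finite G \<and> (\<forall>i<2. 1 \<le> n i) \<and>
           (\<forall>i<2. \<forall>j<n i. binary_val G (v i j)) \<and>
           \<not> (\<exists>P. is_partition 2 G P \<and> h_dem_pos_mms_fair h 2 G n v P)"
proof -
  have "\<not> is_partition 2 {..<3} P"
    if fair: "h_dem_pos_mms_fair h 2 {..<3} (\<lambda>_. 3) (\<lambda>_. all_but 3) P" for P
  proof
    assume part: "is_partition 2 {..<3} P"
    then obtain i where "i < 2" "card (P i) < 2"
      using partition_three_small_bundle by blast
    moreover have "P i \<subseteq> {..<3}"
      using part \<open>i < 2\<close> unfolding is_partition_def by auto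
    moreover have "\<forall>j<3. util (all_but 3 j) (P i) > 0"
      using h_dem_pos_mms_fair_all_agents[OF fair \<open>i < 2\<close>] assms(1) mms_all_but_pos[of 3]
      by (auto simp: pos_mms_fair_def)
    ultimately show False
      using two_le_card_if_valued_by_all_but[of 3 "P i"] by simp
  qed
  then show ?thesis
    by (intro exI[of _ "{..<3}"] exI[of _ "\<lambda>_. 3"] exI[of _ "\<lambda>_. all_but 3"])
      (auto simp: binary_val_all_but)
qed

end
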